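(* For distinct sets $X,Y\in\mathcal{X}_2$, the inclusion $X\subset Y$ holds if and only if $X\subseteq1+4\mathbb{N}_0$ and $i(Y)<i(X)$.
   Context: $\mathbb{N}=\{1,2,\dots\}$, $\mathbb{N}_0=\{0\}\cup\mathbb{N}$, $x^{\mathbb{N}}=\{x^k:k\in\mathbb{N}\}$. $\mathcal{X}_2=\{\overline{a^{\mathbb{N}}}:a\in\mathbb{N}\setminus2\mathbb{N},\ a\ne1\}$, closures taken in the $2$-adic topology on $\mathbb{N}\setminus2\mathbb{N}$ (generated by the sets $x+2^m\mathbb{N}_0$). $\mathbb{Z}_{2^m}^\times$ is the unit group of $\mathbb{Z}/2^m\mathbb{Z}$, $\pi_m:\mathbb{N}\to\mathbb{Z}/2^m\mathbb{Z}$, $x\mapsto x+2^m\mathbb{Z}$. For $X\in\mathcal{X}_2$, $n(X)=\min\{m\in\mathbb{N}:X=\pi_m^{-1}(\pi_m(X)),\ |\pi_m(X)|\ge3\}$ and $i(X)$ is the index of the subgroup $\pi_{n(X)}(X)$ in $\mathbb{Z}_{2^{n(X)}}^\times$. *)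

theory Defs
  imports Main
begin

text \<open>Natural numbers N = {1,2,...} are represented as positive nat; odd positive
 naturals form the ambient space N \ 2N. The residue ring Z/2^m Z is represented by
 the canonical representatives {0..<2^m}, and pi_m x = x mod 2^m.\<close>

definition odd_nats :: "nat set" where
  "odd_nats = {x. x > 0 \<and> odd x}"

definition pows :: "nat \<Rightarrow> nat set" where
  "pows a = {a ^ k | k. k \<ge> 1}"

text \<open>Closure in the 2-adic topology on the odd naturals, generated by the sets
 x + 2^m N_0 (m in N).  A point y lies in the closure of S iff every generating
 set containing y meets S; the sets y + 2^m N_0 form a neighbourhood base at y.\<close>
definition adic_closure :: "nat set \<Rightarrow> nat set" where
  "adic_closure S = {y \<in> odd_nats. \<forall>m::nat. m \<ge> 1 \<longrightarrow>
       (\<exists>s\<in>S. \<exists>k::nat. s = y + 2 ^ m * k)}"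

definition calX2 :: "nat set set" where
  "calX2 = {adic_closure (pows a) | a. a \<in> odd_nats \<and> a \<noteq> 1}"

definition pi_m :: "nat \<Rightarrow> nat \<Rightarrow> nat" where
  "pi_m m x = x mod 2 ^ m"

definition units2 :: "nat \<Rightarrow> nat set" where
  "units2 m = {u. u < 2 ^ m \<and> coprime u (2 ^ m)}"

definition nX :: "nat set \<Rightarrow> nat" where
  "nX X = (LEAST m. m \<ge> 1 \<and> X = {x. x > 0 \<and> pi_m m x \<in> pi_m m ` X}
                     \<and> card (pi_m m ` X) \<ge> 3)"

definition iX :: "nat set \<Rightarrow> nat" where
  "iX X = (let m = nX X; H = pi_m m ` X in
      card {(\<lambda>h. (u * h) mod 2 ^ m) ` H | u. u \<in> units2 m})"

end

(* Every X in calX2 is the closure of the powers of an odd a > 1, and a = 1 + 2^t v or a = 2^t v - 1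
   with v odd and t >= 2.  Since (1 + 2^s w)^(2^j) = 1 + 2^(s+j) w' with w, w' odd whenever s >= 2,
   the powers of a meet every residue class modulo every 2^m that is compatible with their residues
   modulo 2^t (resp. 2^(t+1)).  Hence X = {x. x = 1 mod 2^t} or X = {x. x = 1 or 2^t - 1 mod 2^(t+1)}.
   In both cases n(X) = t + 2 and pi_(t+2)(X) is a subgroup of order 4 of the unit group of order
   2^(t+1), so i(X) = 2^(t-1) by Lagrange's theorem.  Only the first kind lies in 1 + 4 N_0, sets of
   the second kind are contained in no other member of calX2, and {x. x = 1 mod 2^t} is contained in
   another member exactly when that member has a smaller t. *)

theory Submission
  imports Defs "HOL-Algebra.Multiplicative_Group" "HOL-Algebra.Left_Coset"
    "HOL-Computational_Algebra.Primes"
begin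

lemma one_plus_mult_mod: "1 < M \<Longrightarrow> (1 + M * k) mod M = (1::nat)"
  by (metis mod_less mod_mult_self2 mult.commute)

lemma mod_two_pow_le_eq:
  fixes x :: nat
  assumes "s \<le> t" "x mod 2 ^ t = r"
  shows "x mod 2 ^ s = r mod 2 ^ s"
  using assms by (metis mod_exp_eq min.absorb2)

lemma mod_two_pow_Suc: "(a::nat) mod 2 ^ Suc m = 2 ^ m * (a div 2 ^ m mod 2) + a mod 2 ^ m"
  by (metis mod_mult2_eq power_Suc2)

lemma odd_mod_two_pow_iff: "odd (a mod 2 ^ m) \<longleftrightarrow> 0 < m \<and> odd (a::nat)"
  using even_mod_exp_div_exp_iff[of a m 0] by auto

lemma two_pow_minus_one_mod: "(2 ^ n - 1) mod 2 ^ m = (2 ^ min m n - 1 :: nat)"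
proof -
  have "take_bit m (mask n :: nat) = mask (min m n)"
    by (rule take_bit_of_mask)
  then show ?thesis
    by (simp add: take_bit_eq_mod mask_eq_exp_minus_1)
qed

lemma square_two_pow_minus_one_mod:
  assumes "1 \<le> t"
  shows "(2 ^ t - 1) * (2 ^ t - 1) mod 2 ^ (t + 1) = (1::nat)"
proof -
  obtain u where t: "t = Suc u"
    using assms by (cases t) auto
  obtain p where p: "(2::nat) ^ u = Suc p"
    using not0_implies_Suc[of "2 ^ u"] by auto
  have "(2 ^ t - 1) * (2 ^ t - 1) = 1 + 2 ^ (t + 1) * (p::nat)"
    by (simp add: t p algebra_simps)
  moreover have "(1::nat) < 2 ^ (t + 1)"
    using one_less_power[of "2::nat" "t + 1"] by simp
  ultimately show ?thesis
    by (metis one_plus_mult_mod)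
qed

lemma card_lift_residues:
  fixes d K :: nat
  assumes "R \<subseteq> {..<d}"
  shows "card {r. r < d * K \<and> r mod d \<in> R} = card R * K"
proof -
  have lift_bound: "a + d * q < d * K" if "a \<in> R" "q < K" for a q
  proof -
    have "a + d * q < d * Suc q" using that assms by auto
    also have "\<dots> \<le> d * K" using that by (intro mult_le_mono2) simp
    finally show ?thesis .
  qed
  have "bij_betw (\<lambda>r. (r mod d, r div d)) {r. r < d * K \<and> r mod d \<in> R} (R \<times> {..<K})"
  proof (rule bij_betwI[where g = "\<lambda>(a, q). a + d * q"])
    show "(\<lambda>r. (r mod d, r div d)) \<in> {r. r < d * K \<and> r mod d \<in> R} \<rightarrow> R \<times> {..<K}"
      by (auto simp: less_mult_imp_div_less mult.commute)
    show "(\<lambda>(a, q). a + d * q) \<in> R \<times> {..<K} \<rightarrow> {r. r < d * K \<and> r mod d \<in> R}"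
      using assms lift_bound by auto
    show "(\<lambda>(a, q). a + d * q) (r mod d, r div d) = r" for r
      by simp
    show "(\<lambda>r. (r mod d, r div d)) ((\<lambda>(a, q). a + d * q) p) = p" if "p \<in> R \<times> {..<K}" for p
      using that assms by auto
  qed
  then show ?thesis
    by (simp add: bij_betw_same_card card_cartesian_product)
qed

definition pi_preimage :: "nat \<Rightarrow> nat set \<Rightarrow> nat set" where
  "pi_preimage m R = {x. 0 < x \<and> pi_m m x \<in> R}"

lemma mem_pi_preimage_iff [simp]: "x \<in> pi_preimage m R \<longleftrightarrow> 0 < x \<and> x mod 2 ^ m \<in> R"
  by (simp add: pi_preimage_def pi_m_def)

lemma image_pi_preimage:
  assumes "M \<le> m" "0 \<notin> R"
  shows "pi_m m ` pi_preimage M R = {r. r < 2 ^ m \<and> r mod 2 ^ M \<in> R}"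
proof (intro equalityI subsetI)
  fix r assume r: "r \<in> {r. r < 2 ^ m \<and> r mod 2 ^ M \<in> R}"
  with assms(2) have "r \<in> pi_preimage M R" by (cases r) auto
  moreover have "r = pi_m m r" using r by (simp add: pi_m_def)
  ultimately show "r \<in> pi_m m ` pi_preimage M R" by (rule rev_image_eqI)
qed (use assms(1) in \<open>auto simp: pi_m_def mod_exp_eq min.absorb2\<close>)

lemma pi_preimage_image_pi_preimage:
  assumes "M \<le> m"
  shows "pi_preimage m (pi_m m ` pi_preimage M R) = pi_preimage M R"
proof (intro equalityI subsetI)
  fix x assume "x \<in> pi_preimage m (pi_m m ` pi_preimage M R)"
  then obtain y where "0 < x" "y \<in> pi_preimage M R" "x mod 2 ^ m = y mod 2 ^ m"
    by (auto simp: pi_m_def)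
  then have "x mod 2 ^ M = y mod 2 ^ M"
    using mod_two_pow_le_eq[OF assms] by metis
  with \<open>0 < x\<close> \<open>y \<in> pi_preimage M R\<close> show "x \<in> pi_preimage M R" by simp
qed (auto simp: pi_m_def)

lemma card_image_pi_preimage:
  assumes "M \<le> m" "R \<subseteq> {r. odd r \<and> r < 2 ^ M}"
  shows "card (pi_m m ` pi_preimage M R) = card R * 2 ^ (m - M)"
proof -
  have "(2::nat) ^ m = 2 ^ M * 2 ^ (m - M)"
    using assms(1) by (simp flip: power_add)
  moreover have "0 \<notin> R" "R \<subseteq> {..<2 ^ M}"
    using assms(2) by auto
  ultimately show ?thesis
    using assms(1) by (simp add: image_pi_preimage card_lift_residues)
qed

lemma card_image_pi_m_mono:
  assumes "m \<le> m'"
  shows "card (pi_m m ` X) \<le> card (pi_m m' ` X)"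
proof -
  have "pi_m m ` X = pi_m m ` pi_m m' ` X"
    using assms by (simp add: image_image pi_m_def mod_exp_eq min.absorb1)
  moreover have "finite (pi_m m' ` X)"
    by (rule finite_subset[of _ "{..<2 ^ m'}"]) (auto simp: pi_m_def)
  ultimately show ?thesis
    by (simp add: card_image_le)
qed

lemma nX_pi_preimage:
  assumes R: "R \<subseteq> {r. odd r \<and> r < 2 ^ M}" and "M < n" and card_R: "card R * 2 ^ (n - M) = 4"
  shows "nX (pi_preimage M R) = n"
  unfolding nX_def pi_preimage_def [symmetric]
proof (rule Least_equality)
  show "1 \<le> n \<and> pi_preimage M R = pi_preimage n (pi_m n ` pi_preimage M R)
      \<and> 3 \<le> card (pi_m n ` pi_preimage M R)"
    using assms by (simp add: pi_preimage_image_pi_preimage card_image_pi_preimage)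
next
  fix m
  assume "1 \<le> m \<and> pi_preimage M R = pi_preimage m (pi_m m ` pi_preimage M R)
      \<and> 3 \<le> card (pi_m m ` pi_preimage M R)"
  then have "3 \<le> card (pi_m m ` pi_preimage M R)" by simp
  show "n \<le> m"
  proof (rule ccontr)
    assume "\<not> n \<le> m"
    have "n - M = Suc (n - 1 - M)"
      using \<open>M < n\<close> by simp
    then have "card (pi_m (n - 1) ` pi_preimage M R) = 2"
      using card_R \<open>M < n\<close> by (simp add: card_image_pi_preimage[OF _ R])
    moreover have "card (pi_m m ` pi_preimage M R) \<le> card (pi_m (n - 1) ` pi_preimage M R)"
      using \<open>\<not> n \<le> m\<close> by (intro card_image_pi_m_mono) simp
    ultimately show False
      using \<open>3 \<le> card (pi_m m ` pi_preimage M R)\<close> by simp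
  qed
qed

section \<open>The index of a preimage of a subgroup of units\<close>

lemma (in group) finite_subgroupI:
  assumes "finite (carrier G)" "H \<subseteq> carrier G" "\<one> \<in> H"
    and mult_closed: "\<And>a b. a \<in> H \<Longrightarrow> b \<in> H \<Longrightarrow> a \<otimes> b \<in> H"
  shows "subgroup H G"
proof (rule subgroupI)
  have pow_closed: "a [^] k \<in> H" if "a \<in> H" for a and k :: nat
    using that assms(3) mult_closed by (induction k) auto
  fix a assume a: "a \<in> H"
  then have a_carrier: "a \<in> carrier G" using assms(2) by blast
  have "order G \<ge> 1"
    using assms(1) by (simp add: order_gt_0_iff_finite Suc_le_eq)
  then have "a [^] (order G - 1) \<otimes> a = a [^] order G"
    using a_carrier by (metis nat_pow_Suc Suc_diff_1 less_le_trans zero_less_one)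
  also have "\<dots> = \<one>"
    using a_carrier by (rule pow_order_eq_1)
  finally have "inv a = a [^] (order G - 1)"
    using a_carrier by (intro inv_equality) simp_all
  then show "inv a \<in> H"
    using pow_closed[OF a] by simp
qed (use assms in auto)

definition unit_group_mod :: "nat \<Rightarrow> nat monoid" where
  "unit_group_mod N =
    \<lparr>carrier = {u. u < N \<and> coprime u N}, monoid.mult = (\<lambda>x y. x * y mod N), one = 1\<rparr>"

lemma group_unit_group_mod:
  assumes "1 < N"
  shows "group (unit_group_mod N)"
proof (rule groupI)
  fix x assume "x \<in> carrier (unit_group_mod N)"
  then have x: "x < N" "coprime x N"
    by (simp_all add: unit_group_mod_def)
  have "x \<noteq> 0"
    using x(2) assms by (intro notI) simp
  then obtain y k where "x * y = N * k + gcd x N"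
    using bezout_nat by blast
  then have inverse: "y * x mod N = 1"
    using x(2) assms by (metis mod_mult_self3 mod_less mult.commute coprime_iff_gcd_eq_1)
  then have "coprime (y * x) N"
    using assms by (metis coprime_1_left coprime_mod_left_iff not_one_less_zero)
  then have "coprime (y mod N) N"
    using assms by simp
  moreover have "y mod N * x mod N = 1"
    using inverse by (simp add: mod_mult_left_eq)
  ultimately show "\<exists>y\<in>carrier (unit_group_mod N). y \<otimes>\<^bsub>unit_group_mod N\<^esub> x = \<one>\<^bsub>unit_group_mod N\<^esub>"
    using assms by (intro bexI[of _ "y mod N"]) (auto simp: unit_group_mod_def)
qed (use assms in \<open>auto simp: unit_group_mod_def mod_mult_left_eq mod_mult_right_eq mult.assoc\<close>)

lemma card_units2:
  assumes "1 \<le> n"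
  shows "card (units2 n) = 2 ^ (n - 1)"
proof -
  have "units2 n = {r. r < 2 * 2 ^ (n - 1) \<and> r mod 2 \<in> {1}}"
    using assms by (auto simp: units2_def odd_iff_mod_2_eq_one simp flip: power_Suc)
  then show ?thesis
    using card_lift_residues[of "{1}" 2 "2 ^ (n - 1)"] by simp
qed

(* iX X counts the left cosets of pi_m (nX X) ` X in the unit group: this is Lagrange's theorem. *)
lemma iX_mult_card:
  assumes "1 \<le> nX X" and subgroup: "subgroup (pi_m (nX X) ` X) (unit_group_mod (2 ^ nX X))"
  shows "iX X * card (pi_m (nX X) ` X) = 2 ^ (nX X - 1)"
proof -
  define n where "n = nX X"
  define H where "H = pi_m n ` X"
  interpret group "unit_group_mod (2 ^ n)"
    using assms(1) by (intro group_unit_group_mod one_less_power) (simp_all add: n_def)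
  have "card (lcosets\<^bsub>unit_group_mod (2 ^ n)\<^esub> H) * card H = order (unit_group_mod (2 ^ n))"
    using subgroup by (intro l_lagrange) (simp_all add: unit_group_mod_def n_def H_def)
  moreover have "lcosets\<^bsub>unit_group_mod (2 ^ n)\<^esub> H = {(\<lambda>h. (u * h) mod 2 ^ n) ` H | u. u \<in> units2 n}"
    by (auto simp: LCOSETS_def l_coset_def unit_group_mod_def units2_def)
  moreover have "order (unit_group_mod (2 ^ n)) = 2 ^ (n - 1)"
    using assms(1) card_units2 by (simp add: order_def unit_group_mod_def units2_def n_def)
  ultimately show ?thesis
    by (simp add: iX_def Let_def n_def H_def)
qed

lemma subgroup_image_pi_preimage:
  assumes R: "R \<subseteq> {r. odd r \<and> r < 2 ^ M}" "1 \<in> R"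
    and mult_closed: "\<And>x y. x \<in> R \<Longrightarrow> y \<in> R \<Longrightarrow> x * y mod 2 ^ M \<in> R"
    and "M \<le> m"
  shows "subgroup (pi_m m ` pi_preimage M R) (unit_group_mod (2 ^ m))"
proof -
  have "1 \<le> M"
    using R by (cases M) auto
  then have "1 \<le> m"
    using \<open>M \<le> m\<close> by simp
  then have "(1::nat) < 2 ^ m"
    using one_less_power[of "2::nat" m] by simp
  interpret group "unit_group_mod (2 ^ m)"
    using \<open>1 \<le> m\<close> by (intro group_unit_group_mod one_less_power) simp_all
  have "0 \<notin> R"
    using R by auto
  show ?thesis
    unfolding image_pi_preimage[OF \<open>M \<le> m\<close> \<open>0 \<notin> R\<close>]
  proof (rule finite_subgroupI)
    show "{r. r < 2 ^ m \<and> r mod 2 ^ M \<in> R} \<subseteq> carrier (unit_group_mod (2 ^ m))"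
      using R \<open>1 \<le> m\<close> by (auto simp: unit_group_mod_def odd_mod_two_pow_iff)
    show "\<one>\<^bsub>unit_group_mod (2 ^ m)\<^esub> \<in> {r. r < 2 ^ m \<and> r mod 2 ^ M \<in> R}"
      using R \<open>1 \<le> M\<close> \<open>1 < 2 ^ m\<close> by (simp add: unit_group_mod_def)
    fix x y assume "x \<in> {r. r < 2 ^ m \<and> r mod 2 ^ M \<in> R}" "y \<in> {r. r < 2 ^ m \<and> r mod 2 ^ M \<in> R}"
    then have "x * y mod 2 ^ M \<in> R"
      using mult_closed by (metis (no_types, lifting) mem_Collect_eq mod_mult_eq)
    then show "x \<otimes>\<^bsub>unit_group_mod (2 ^ m)\<^esub> y \<in> {r. r < 2 ^ m \<and> r mod 2 ^ M \<in> R}"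
      using \<open>M \<le> m\<close> by (simp add: unit_group_mod_def mod_exp_eq min.absorb2)
  qed (simp add: unit_group_mod_def)
qed

lemma iX_pi_preimage:
  assumes R: "R \<subseteq> {r. odd r \<and> r < 2 ^ M}" "1 \<in> R"
    and mult_closed: "\<And>x y. x \<in> R \<Longrightarrow> y \<in> R \<Longrightarrow> x * y mod 2 ^ M \<in> R"
    and "M < n" and card_R: "card R * 2 ^ (n - M) = 4"
  shows "iX (pi_preimage M R) * 4 = 2 ^ (n - 1)"
proof -
  have n: "nX (pi_preimage M R) = n"
    using R(1) \<open>M < n\<close> card_R by (rule nX_pi_preimage)
  have "card (pi_m n ` pi_preimage M R) = 4"
    using R(1) \<open>M < n\<close> card_R by (simp add: card_image_pi_preimage)
  moreover have "subgroup (pi_m n ` pi_preimage M R) (unit_group_mod (2 ^ n))"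
    using R mult_closed \<open>M < n\<close> by (intro subgroup_image_pi_preimage) simp_all
  ultimately show ?thesis
    using iX_mult_card[of "pi_preimage M R"] \<open>M < n\<close> by (simp add: n)
qed

lemma iX_pi_preimage_one:
  assumes "2 \<le> t"
  shows "iX (pi_preimage t {1}) = 2 ^ (t - 1)"
proof -
  have "(1::nat) < 2 ^ t"
    using assms one_less_power[of "2::nat" t] by simp
  then have "iX (pi_preimage t {1}) * 4 = 2 ^ (t + 2 - 1)"
    using assms by (intro iX_pi_preimage) auto
  moreover have "(2::nat) ^ (t + 2 - 1) = 2 ^ (t - 1) * 4"
    using assms by (cases t) simp_all
  ultimately show ?thesis
    by simp
qed

lemma iX_pi_preimage_pm_one:
  assumes "2 \<le> t"
  shows "iX (pi_preimage (t + 1) {1, 2 ^ t - 1}) = 2 ^ (t - 1)"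
proof -
  define c :: nat where "c = 2 ^ t - 1"
  have "(2::nat) ^ 2 \<le> 2 ^ t"
    using assms by (intro power_increasing) simp_all
  then have c: "odd c" "1 < c" "c < 2 ^ (t + 1)"
    using assms by (auto simp: c_def)
  have cc: "c * c mod 2 ^ (t + 1) = 1"
    unfolding c_def using assms by (intro square_two_pow_minus_one_mod) simp
  have "iX (pi_preimage (t + 1) {1, c}) * 4 = 2 ^ (t + 2 - 1)"
  proof (rule iX_pi_preimage)
    show "{1, c} \<subseteq> {r. odd r \<and> r < 2 ^ (t + 1)}"
      using c one_less_power[of "2::nat" "t + 1"] by simp
    show "x * y mod 2 ^ (t + 1) \<in> {1, c}" if "x \<in> {1, c}" "y \<in> {1, c}" for x y
      using that c cc by auto
    show "card {1, c} * 2 ^ (t + 2 - (t + 1)) = 4"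
      using c by simp
  qed simp_all
  moreover have "(2::nat) ^ (t + 2 - 1) = 2 ^ (t - 1) * 4"
    using assms by (cases t) simp_all
  ultimately show ?thesis
    by (simp add: c_def)
qed

section \<open>Closures of the powers of an odd number\<close>

lemma mem_adic_closure_iff:
  "y \<in> adic_closure S \<longleftrightarrow> 0 < y \<and> odd y \<and> (\<forall>m. \<exists>s\<in>S. s mod 2 ^ m = y mod 2 ^ m)"
proof (intro iffI conjI allI)
  assume y: "y \<in> adic_closure S"
  then show "0 < y" "odd y"
    by (simp_all add: adic_closure_def odd_nats_def)
  fix m
  have "\<forall>m\<ge>1. \<exists>s\<in>S. \<exists>k. s = y + 2 ^ m * k"
    using y unfolding adic_closure_def by blast
  then have "\<exists>s\<in>S. \<exists>k. s = y + 2 ^ Suc m * k"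
    by (simp del: power_Suc)
  then obtain s k where "s \<in> S" "s = y + 2 ^ m * (2 * k)"
    by (auto simp: mult_ac)
  then show "\<exists>s\<in>S. s mod 2 ^ m = y mod 2 ^ m"
    by (metis mod_mult_self2)
next
  assume y: "0 < y \<and> odd y \<and> (\<forall>m. \<exists>s\<in>S. s mod 2 ^ m = y mod 2 ^ m)"
  show "y \<in> adic_closure S"
    unfolding adic_closure_def odd_nats_def
  proof (intro CollectI conjI allI impI)
    fix m :: nat
    obtain s where "s \<in> S" and s: "s mod 2 ^ (m + y) = y mod 2 ^ (m + y)"
      using y by blast
    have "y < 2 ^ (m + y)"
      by (rule less_le_trans[OF less_exp]) simp
    then have "s = y + 2 ^ m * (2 ^ y * (s div 2 ^ (m + y)))"
      using s by (metis div_mult_mod_eq add.commute mod_less mult.commute mult.assoc power_add)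
    with \<open>s \<in> S\<close> show "\<exists>s\<in>S. \<exists>k. s = y + 2 ^ m * k"
      by blast
  qed (use y in auto)
qed

lemma adic_closure_pows_eqI:
  assumes R: "R \<subseteq> {r. odd r \<and> r < 2 ^ M}"
    and pow_mem: "\<And>k. 1 \<le> k \<Longrightarrow> a ^ k mod 2 ^ M \<in> R"
    and pow_hits: "\<And>x d. x mod 2 ^ M \<in> R \<Longrightarrow> \<exists>k\<ge>1. a ^ k mod 2 ^ (M + d) = x mod 2 ^ (M + d)"
  shows "adic_closure (pows a) = pi_preimage M R"
proof (intro equalityI subsetI)
  fix y assume "y \<in> adic_closure (pows a)"
  then obtain k where "0 < y" "1 \<le> k" "a ^ k mod 2 ^ M = y mod 2 ^ M"
    by (force simp: mem_adic_closure_iff pows_def)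
  with pow_mem show "y \<in> pi_preimage M R"
    by (metis mem_pi_preimage_iff)
next
  fix y assume "y \<in> pi_preimage M R"
  then have y: "0 < y" "y mod 2 ^ M \<in> R"
    by simp_all
  then have "odd y"
    using R odd_mod_two_pow_iff by blast
  have "\<exists>s\<in>pows a. s mod 2 ^ m = y mod 2 ^ m" for m
  proof -
    obtain k where "1 \<le> k" "a ^ k mod 2 ^ (M + m) = y mod 2 ^ (M + m)"
      using pow_hits y(2) by blast
    then have "a ^ k mod 2 ^ m = y mod 2 ^ m"
      using mod_two_pow_le_eq[of m "M + m"] by (metis le_add2)
    with \<open>1 \<le> k\<close> show ?thesis
      by (auto simp: pows_def)
  qed
  with y(1) \<open>odd y\<close> show "y \<in> adic_closure (pows a)"
    by (simp add: mem_adic_closure_iff)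
qed

lemma pow_two_pow_one_plus:
  fixes v :: nat
  assumes "2 \<le> s" "odd v"
  shows "\<exists>w. odd w \<and> (1 + 2 ^ s * v) ^ 2 ^ j = 1 + 2 ^ (s + j) * w"
proof (induction j)
  case 0
  show ?case using assms(2) by auto
next
  case (Suc j)
  then obtain w where "odd w" and w: "(1 + 2 ^ s * v) ^ 2 ^ j = 1 + 2 ^ (s + j) * w"
    by blast
  define r where "r = s + j - 1"
  have r: "s + j = Suc r" "1 \<le> r"
    using assms(1) by (simp_all add: r_def)
  have "(1 + 2 ^ s * v) ^ 2 ^ Suc j = (1 + 2 ^ (s + j) * w) ^ 2"
    by (simp only: power_Suc2 power_mult w)
  also have "\<dots> = 1 + 2 ^ (s + Suc j) * (w + 2 ^ r * w ^ 2)"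
  proof -
    have "(2::nat) ^ (s + j) = 2 * 2 ^ r" "(2::nat) ^ (s + Suc j) = 4 * 2 ^ r"
      using r(1) by simp_all
    then show ?thesis
      by (simp add: power2_eq_square algebra_simps)
  qed
  finally show ?case
    using \<open>odd w\<close> r(2) by (intro exI[of _ "w + 2 ^ r * w ^ 2"]) simp
qed

lemma exists_mult_pow_mod_eq:
  fixes c v x :: nat
  assumes "odd c" "2 \<le> s" "odd v" "x mod 2 ^ s = c mod 2 ^ s"
  shows "\<exists>k. c * (1 + 2 ^ s * v) ^ k mod 2 ^ (s + d) = x mod 2 ^ (s + d)"
proof (induction d)
  case 0
  show ?case using assms(4) by (intro exI[of _ 0]) simp
next
  case (Suc d)
  define b m where "b = 1 + 2 ^ s * v" and "m = s + d"
  then obtain k where k: "c * b ^ k mod 2 ^ m = x mod 2 ^ m"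
    using Suc by blast
  define z where "z = c * b ^ k"
  have "odd z"
    using assms(1,2) by (simp add: z_def b_def)
  show ?case
  proof (cases "z div 2 ^ m mod 2 = x div 2 ^ m mod 2")
    case True
    then have "z mod 2 ^ Suc m = x mod 2 ^ Suc m"
      using k[folded z_def] unfolding mod_two_pow_Suc by simp
    then show ?thesis
      by (auto simp: z_def b_def m_def)
  next
    case False
    \<comment> \<open>Multiplying by \<open>b ^ 2 ^ d = 1 + 2 ^ m * w\<close>, \<open>w\<close> odd, flips bit \<open>m\<close> and keeps the lower ones.\<close>
    obtain w where "odd w" and w: "b ^ 2 ^ d = 1 + 2 ^ m * w"
      using pow_two_pow_one_plus[OF assms(2,3), of d] by (auto simp: b_def m_def)
    have z': "c * b ^ (k + 2 ^ d) = z + 2 ^ m * (z * w)"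
      by (simp add: z_def power_add w algebra_simps)
    have "(z + 2 ^ m * (z * w)) div 2 ^ m mod 2 = x div 2 ^ m mod 2"
      using False \<open>odd z\<close> \<open>odd w\<close> by (simp add: mod2_eq_if split: if_splits)
    moreover have "(z + 2 ^ m * (z * w)) mod 2 ^ m = x mod 2 ^ m"
      using k[folded z_def] by simp
    ultimately have "c * b ^ (k + 2 ^ d) mod 2 ^ Suc m = x mod 2 ^ Suc m"
      unfolding z' mod_two_pow_Suc by simp
    then show ?thesis
      by (auto simp: b_def m_def)
  qed
qed

lemma adic_closure_pows_one_plus:
  fixes v :: nat
  assumes "2 \<le> t" "odd v"
  shows "adic_closure (pows (1 + 2 ^ t * v)) = pi_preimage t {1}"
proof (rule adic_closure_pows_eqI)
  define a where "a = 1 + 2 ^ t * v"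
  have pow_gt_1: "(1::nat) < 2 ^ t"
    using assms(1) one_less_power[of "2::nat" t] by simp
  then have a_mod: "a mod 2 ^ t = 1"
    unfolding a_def by (rule one_plus_mult_mod)
  then show "{1::nat} \<subseteq> {r. odd r \<and> r < 2 ^ t}"
    using assms(1) pow_gt_1 by auto
  show "a ^ k mod 2 ^ t \<in> {1}" for k
    using a_mod assms(1) by (simp add: power_mod[symmetric])
  show "\<exists>k\<ge>1. a ^ k mod 2 ^ (t + d) = x mod 2 ^ (t + d)" if "x mod 2 ^ t \<in> {1}" for x d
  proof -
    have "odd a"
      using assms(1) by (simp add: a_def)
    moreover have "x mod 2 ^ t = a mod 2 ^ t"
      using that a_mod by simp
    ultimately obtain k where "a * a ^ k mod 2 ^ (t + d) = x mod 2 ^ (t + d)"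
      using exists_mult_pow_mod_eq[of a t v x d, folded a_def] assms by blast
    then show ?thesis
      by (intro exI[of _ "Suc k"]) simp
  qed
qed

lemma two_pow_mult_odd_minus_one_mod:
  fixes a v :: nat
  assumes "1 \<le> t" "odd v" "a + 1 = 2 ^ t * v"
  shows "a mod 2 ^ (t + 1) = 2 ^ t - 1"
proof -
  obtain w where "v = 2 * w + 1"
    using assms(2) oddE by blast
  then have "a = (2 ^ t - 1) + 2 ^ (t + 1) * w"
    using assms(3) by (simp add: algebra_simps)
  moreover have "(2::nat) ^ (t + 1) = 2 * 2 ^ t" "(0::nat) < 2 ^ t"
    by simp_all
  then have "(2::nat) ^ t - 1 < 2 ^ (t + 1)"
    by linarith
  ultimately show ?thesis
    by (metis mod_less mod_mult_self2)
qed

lemma square_two_pow_mult_odd_minus_one: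
  fixes a v :: nat
  assumes "2 \<le> t" "odd v" "a + 1 = 2 ^ t * v"
  shows "\<exists>w. odd w \<and> a ^ 2 = 1 + 2 ^ (t + 1) * w"
proof -
  obtain u where t: "t = u + 2"
    using assms(1) by (metis add.commute le_Suc_ex)
  define q where "q = a div 2"
  have "even (a + 1)"
    using assms(3) by (simp add: t)
  then have a_q: "a = 2 * q + 1"
    by (simp add: q_def)
  then have q1: "q + 1 = 2 * 2 ^ u * v"
    using assms(3) by (simp add: t)
  then have "odd q"
    by (metis even_add even_mult_iff even_numeral odd_one)
  have "a ^ 2 = 1 + 4 * (q * (q + 1))"
    by (simp add: a_q power2_eq_square algebra_simps)
  also have "\<dots> = 1 + 4 * (q * (2 * 2 ^ u * v))"
    by (simp only: q1)
  finally have "a ^ 2 = 1 + 2 ^ (t + 1) * (v * q)"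
    by (simp add: t algebra_simps)
  with assms(2) \<open>odd q\<close> show ?thesis
    by auto
qed

lemma exists_pow_mod_eq_of_square:
  fixes a w x :: nat
  assumes "odd a" "2 \<le> s" "odd w" and a_sq: "a ^ 2 = 1 + 2 ^ s * w"
    and x: "x mod 2 ^ s = 1 \<or> x mod 2 ^ s = a mod 2 ^ s"
  shows "\<exists>k\<ge>1. a ^ k mod 2 ^ (s + d) = x mod 2 ^ (s + d)"
proof -
  have "(1::nat) < 2 ^ s"
    using assms(2) one_less_power[of "2::nat" s] by simp
  then have "a ^ 2 mod 2 ^ s = 1"
    unfolding a_sq by (rule one_plus_mult_mod)
  with x consider "x mod 2 ^ s = a ^ 2 mod 2 ^ s" | "x mod 2 ^ s = a mod 2 ^ s"
    by metis
  then show ?thesis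
  proof cases
    case 1
    then obtain k where "a ^ 2 * (a ^ 2) ^ k mod 2 ^ (s + d) = x mod 2 ^ (s + d)"
      using exists_mult_pow_mod_eq[of "a ^ 2" s w x d] assms by auto
    moreover have "a ^ 2 * (a ^ 2) ^ k = a ^ (2 * k + 2)"
      by (metis power_add power_mult mult.commute)
    ultimately show ?thesis
      by (intro exI[of _ "2 * k + 2"]) simp
  next
    case 2
    then obtain k where "a * (a ^ 2) ^ k mod 2 ^ (s + d) = x mod 2 ^ (s + d)"
      using exists_mult_pow_mod_eq[of a s w x d] assms by auto
    moreover have "a * (a ^ 2) ^ k = a ^ (2 * k + 1)"
      by (metis power_add power_mult power_one_right mult.commute)
    ultimately show ?thesis
      by (intro exI[of _ "2 * k + 1"]) simp
  qed
qed

lemma adic_closure_pows_minus_one: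
  fixes a v :: nat
  assumes "2 \<le> t" "odd v" "a + 1 = 2 ^ t * v"
  shows "adic_closure (pows a) = pi_preimage (t + 1) {1, 2 ^ t - 1}"
proof -
  define c :: nat where "c = 2 ^ t - 1"
  have "(2::nat) ^ 2 \<le> 2 ^ t"
    using assms(1) by (intro power_increasing) simp_all
  then have c: "odd c" "c < 2 ^ (t + 1)"
    using assms(1) diff_le_self[of "2 ^ t" 1] by (auto simp: c_def)
  have pow_gt_1: "(1::nat) < 2 ^ (t + 1)"
    using one_less_power[of "2::nat" "t + 1"] by simp
  have a_mod: "a mod 2 ^ (t + 1) = c"
    unfolding c_def using assms by (intro two_pow_mult_odd_minus_one_mod) simp_all
  then have "odd a"
    using c(1) odd_mod_two_pow_iff[of a "t + 1"] by simp
  obtain w where "odd w" and a_sq: "a ^ 2 = 1 + 2 ^ (t + 1) * w"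
    using square_two_pow_mult_odd_minus_one[OF assms] by blast
  have c_sq: "c * c mod 2 ^ (t + 1) = 1"
    unfolding c_def using assms(1) by (intro square_two_pow_minus_one_mod) simp
  show ?thesis
    unfolding c_def[symmetric]
  proof (rule adic_closure_pows_eqI)
    show "{1, c} \<subseteq> {r. odd r \<and> r < 2 ^ (t + 1)}"
      using c pow_gt_1 by simp
    show "a ^ k mod 2 ^ (t + 1) \<in> {1, c}" for k
    proof (induction k)
      case (Suc k)
      have "a ^ Suc k mod 2 ^ (t + 1) = (a mod 2 ^ (t + 1)) * (a ^ k mod 2 ^ (t + 1)) mod 2 ^ (t + 1)"
        by (simp add: mod_mult_eq)
      then show ?case
        using Suc a_mod c_sq c(2) by auto
    qed (use pow_gt_1 in simp)
    show "\<exists>k\<ge>1. a ^ k mod 2 ^ (t + 1 + d) = x mod 2 ^ (t + 1 + d)"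
      if "x mod 2 ^ (t + 1) \<in> {1, c}" for x d
      using that assms(1) a_mod \<open>odd a\<close> \<open>odd w\<close> a_sq
      by (intro exists_pow_mod_eq_of_square) auto
  qed
qed

lemma exists_two_pow_mult_odd:
  fixes n :: nat
  assumes "0 < n" "4 dvd n"
  shows "\<exists>t v. 2 \<le> t \<and> odd v \<and> n = 2 ^ t * v"
proof -
  obtain v where "n = 2 ^ multiplicity 2 n * v" "odd v"
    using multiplicity_decompose'[of n 2] assms(1) by auto
  moreover have "2 \<le> multiplicity 2 n"
    using assms by (intro multiplicity_geI) simp_all
  ultimately show ?thesis
    by blast
qed

lemma odd_four_dvd_minus_one_or_plus_one:
  fixes a :: nat
  assumes "odd a"
  shows "4 dvd a - 1 \<or> 4 dvd a + 1"
proof -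
  obtain q where q: "a = 2 * q + 1"
    using assms oddE by blast
  show ?thesis
  proof (cases "even q")
    case True
    then obtain r where "q = 2 * r"
      by blast
    then have "a - 1 = 4 * r"
      using q by simp
    then show ?thesis
      by (metis dvd_triv_left)
  next
    case False
    then obtain r where "q = 2 * r + 1"
      using oddE by blast
    then have "a + 1 = 4 * (r + 1)"
      using q by simp
    then show ?thesis
      by (metis dvd_triv_left)
  qed
qed

lemma calX2_cases:
  assumes "X \<in> calX2"
  obtains (one_mod_four) t where "2 \<le> t" "X = pi_preimage t {1}"
    | (three_mod_four) t where "2 \<le> t" "X = pi_preimage (t + 1) {1, 2 ^ t - 1}"
proof -
  obtain a where a: "X = adic_closure (pows a)" "0 < a" "odd a" "a \<noteq> 1"
    using assms unfolding calX2_def odd_nats_def by blast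
  from a(3) have "4 dvd a - 1 \<or> 4 dvd a + 1"
    by (rule odd_four_dvd_minus_one_or_plus_one)
  then show ?thesis
  proof
    assume "4 dvd a - 1"
    have "0 < a - 1"
      using a(2,4) by simp
    from exists_two_pow_mult_odd[OF this \<open>4 dvd a - 1\<close>]
    obtain t v where t: "2 \<le> t" "odd v" "a - 1 = 2 ^ t * v"
      by blast
    then have "a = 1 + 2 ^ t * v"
      using a(2) by simp
    then have "X = pi_preimage t {1}"
      unfolding a(1) by (simp only: adic_closure_pows_one_plus[OF t(1,2)])
    with t(1) show ?thesis
      by (rule one_mod_four)
  next
    assume "4 dvd a + 1"
    have "0 < a + 1"
      by simp
    from exists_two_pow_mult_odd[OF this \<open>4 dvd a + 1\<close>]
    obtain t v where t: "2 \<le> t" "odd v" "a + 1 = 2 ^ t * v"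
      by blast
    have "X = pi_preimage (t + 1) {1, 2 ^ t - 1}"
      unfolding a(1) by (rule adic_closure_pows_minus_one[OF t])
    with t(1) show ?thesis
      by (rule three_mod_four)
  qed
qed

section \<open>Inclusions between the closures\<close>

lemma mem_one_plus_four_mult_iff: "x \<in> {1 + 4 * k | k::nat. True} \<longleftrightarrow> x mod 4 = 1"
proof
  assume "x mod 4 = 1"
  then have "x = 1 + 4 * (x div 4)"
    by (metis div_mult_mod_eq add.commute mult.commute)
  then show "x \<in> {1 + 4 * k | k::nat. True}"
    by blast
qed auto

lemma pi_preimage_one_subset_one_mod_four:
  assumes "2 \<le> t"
  shows "pi_preimage t {1} \<subseteq> {1 + 4 * k | k::nat. True}"
proof
  fix x assume "x \<in> pi_preimage t {1}"
  then have "x mod 2 ^ 2 = 1 mod 2 ^ 2"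
    by (intro mod_two_pow_le_eq[OF assms]) simp
  then show "x \<in> {1 + 4 * k | k::nat. True}"
    unfolding mem_one_plus_four_mult_iff by simp
qed

lemma two_pow_minus_one_mem_pi_preimage_pm_one:
  assumes "1 \<le> t"
  shows "2 ^ t - 1 \<in> pi_preimage (t + 1) {1, 2 ^ t - 1}"
proof -
  have "(1::nat) < 2 ^ t"
    using assms one_less_power[of "2::nat" t] by simp
  then show ?thesis
    by (simp only: mem_pi_preimage_iff two_pow_minus_one_mod) simp
qed

lemma pi_preimage_pm_one_not_subset_one_mod_four:
  assumes "2 \<le> t"
  shows "\<not> pi_preimage (t + 1) {1, 2 ^ t - 1} \<subseteq> {1 + 4 * k | k::nat. True}"
proof -
  have "(2 ^ t - 1) mod 2 ^ 2 = (2 ^ 2 - 1 :: nat)"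
    using assms by (simp only: two_pow_minus_one_mod min.absorb1)
  then have "(2::nat) ^ t - 1 \<notin> {1 + 4 * k | k. True}"
    unfolding mem_one_plus_four_mult_iff by simp
  moreover have "2 ^ t - 1 \<in> pi_preimage (t + 1) {1, 2 ^ t - 1}"
    using assms by (intro two_pow_minus_one_mem_pi_preimage_pm_one) simp
  ultimately show ?thesis
    by blast
qed

lemma pi_preimage_one_antimono:
  assumes "1 \<le> s" "s \<le> t"
  shows "pi_preimage t {1} \<subseteq> pi_preimage s {1}"
proof
  fix x assume "x \<in> pi_preimage t {1}"
  then have x: "0 < x" "x mod 2 ^ t = 1"
    by simp_all
  from x(2) have "x mod 2 ^ s = 1 mod 2 ^ s"
    by (rule mod_two_pow_le_eq[OF assms(2)])
  with x(1) assms(1) show "x \<in> pi_preimage s {1}"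
    by simp
qed

lemma one_plus_two_pow_mem_pi_preimage_one:
  assumes "1 \<le> t" "t \<le> u"
  shows "1 + 2 ^ u \<in> pi_preimage t {1}"
proof -
  have "(1::nat) < 2 ^ t"
    using assms(1) one_less_power[of "2::nat" t] by simp
  moreover have "(1::nat) + 2 ^ u = 1 + 2 ^ t * 2 ^ (u - t)"
    using assms(2) by (simp flip: power_add)
  ultimately show ?thesis
    by (simp only: mem_pi_preimage_iff one_plus_mult_mod) simp
qed

lemma one_plus_two_pow_mod:
  assumes "1 \<le> u" "u < s"
  shows "(1 + 2 ^ u) mod 2 ^ s = (1 + 2 ^ u :: nat)"
proof (rule mod_less)
  have "(2::nat) * 2 ^ u \<le> 2 ^ s"
    using assms(2) power_increasing[of "Suc u" s "2::nat"] by simp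
  moreover have "(2::nat) \<le> 2 ^ u"
    using assms(1) power_increasing[of 1 u "2::nat"] by simp
  ultimately show "1 + 2 ^ u < (2::nat) ^ s"
    by linarith
qed

lemma pi_preimage_one_subset_iff:
  assumes "1 \<le> s" "1 \<le> t"
  shows "pi_preimage t {1} \<subseteq> pi_preimage s {1} \<longleftrightarrow> s \<le> t"
proof
  assume "pi_preimage t {1} \<subseteq> pi_preimage s {1}"
  then have "1 + 2 ^ t \<in> pi_preimage s {1}"
    using one_plus_two_pow_mem_pi_preimage_one[OF assms(2)] by blast
  then show "s \<le> t"
    using one_plus_two_pow_mod[OF assms(2), of s] by (cases "s \<le> t") auto
qed (use assms pi_preimage_one_antimono in auto)

lemma pi_preimage_one_subset_pm_one_iff:
  assumes "1 \<le> s" "1 \<le> t"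
  shows "pi_preimage t {1} \<subseteq> pi_preimage (s + 1) {1, 2 ^ s - 1} \<longleftrightarrow> s < t"
proof
  assume subset: "pi_preimage t {1} \<subseteq> pi_preimage (s + 1) {1, 2 ^ s - 1}"
  show "s < t"
  proof (rule ccontr)
    assume "\<not> s < t"
    then have "1 + 2 ^ s \<in> pi_preimage t {1}"
      using assms(2) by (intro one_plus_two_pow_mem_pi_preimage_one) simp_all
    with subset have "1 + 2 ^ s \<in> pi_preimage (s + 1) {1, 2 ^ s - 1}"
      by blast
    moreover have "(1 + 2 ^ s) mod 2 ^ (s + 1) = (1 + 2 ^ s :: nat)"
      using assms(1) by (intro one_plus_two_pow_mod) simp_all
    ultimately have "1 + 2 ^ s \<in> {1, 2 ^ s - 1 :: nat}"
      by (metis mem_pi_preimage_iff)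
    then show False
      by auto
  qed
next
  assume "s < t"
  then have "pi_preimage t {1} \<subseteq> pi_preimage (s + 1) {1}"
    by (intro pi_preimage_one_antimono) simp_all
  also have "\<dots> \<subseteq> pi_preimage (s + 1) {1, 2 ^ s - 1}"
    by auto
  finally show "pi_preimage t {1} \<subseteq> pi_preimage (s + 1) {1, 2 ^ s - 1}" .
qed

lemma pi_preimage_pm_one_subset_imp_eq:
  assumes "2 \<le> s" "2 \<le> t"
    and subset: "pi_preimage (t + 1) {1, 2 ^ t - 1} \<subseteq> pi_preimage (s + 1) {1, 2 ^ s - 1}"
  shows "s = t"
proof -
  have "2 ^ t - 1 \<in> pi_preimage (t + 1) {1, 2 ^ t - 1}"
    using assms(2) by (intro two_pow_minus_one_mem_pi_preimage_pm_one) simp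
  with subset have "2 ^ t - 1 \<in> pi_preimage (s + 1) {1, 2 ^ s - 1}"
    by blast
  then have "(2::nat) ^ min (s + 1) t - 1 \<in> {1, 2 ^ s - 1}"
    by (simp only: mem_pi_preimage_iff two_pow_minus_one_mod)
  moreover have "(2::nat) ^ k - 1 + 1 = 2 ^ k" for k
    by simp
  ultimately have "(2::nat) ^ min (s + 1) t = 2 ^ 1 \<or> (2::nat) ^ min (s + 1) t = 2 ^ s"
    by (metis insertE one_add_one power_one_right singletonD)
  then have "min (s + 1) t = 1 \<or> min (s + 1) t = s"
    by (simp only: power_inject_exp)
  with assms(1,2) show "s = t"
    by linarith
qed

lemma pi_preimage_one_subset_calX2_iff:
  assumes "2 \<le> t" "Y \<in> calX2" "pi_preimage t {1} \<noteq> Y"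
  shows "pi_preimage t {1} \<subseteq> Y \<longleftrightarrow> iX Y < iX (pi_preimage t {1})"
proof -
  have iX_less_iff: "(2::nat) ^ (s - 1) < 2 ^ (t - 1) \<longleftrightarrow> s < t" if "2 \<le> s" for s
    using that assms(1) by auto
  from assms(2) show ?thesis
  proof (cases rule: calX2_cases)
    case (one_mod_four s)
    have "s \<noteq> t"
      using assms(3) one_mod_four(2) by blast
    have "pi_preimage t {1} \<subseteq> Y \<longleftrightarrow> s \<le> t"
      unfolding one_mod_four(2) using one_mod_four(1) assms(1)
      by (intro pi_preimage_one_subset_iff) simp_all
    moreover have "iX Y < iX (pi_preimage t {1}) \<longleftrightarrow> s < t"
      unfolding one_mod_four(2) iX_pi_preimage_one[OF one_mod_four(1)] iX_pi_preimage_one[OF assms(1)]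
      using one_mod_four(1) by (rule iX_less_iff)
    ultimately show ?thesis
      using \<open>s \<noteq> t\<close> by auto
  next
    case (three_mod_four s)
    have "pi_preimage t {1} \<subseteq> Y \<longleftrightarrow> s < t"
      unfolding three_mod_four(2) using three_mod_four(1) assms(1)
      by (intro pi_preimage_one_subset_pm_one_iff) simp_all
    moreover have "iX Y < iX (pi_preimage t {1}) \<longleftrightarrow> s < t"
      unfolding three_mod_four(2) iX_pi_preimage_pm_one[OF three_mod_four(1)] iX_pi_preimage_one[OF assms(1)]
      using three_mod_four(1) by (rule iX_less_iff)
    ultimately show ?thesis
      by simp
  qed
qed

lemma pi_preimage_pm_one_not_subset_calX2:
  assumes "2 \<le> t" "Y \<in> calX2" "pi_preimage (t + 1) {1, 2 ^ t - 1} \<noteq> Y"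
  shows "\<not> pi_preimage (t + 1) {1, 2 ^ t - 1} \<subseteq> Y"
  using assms(2)
proof (cases rule: calX2_cases)
  case (one_mod_four s)
  then show ?thesis
    using assms(1) pi_preimage_pm_one_not_subset_one_mod_four pi_preimage_one_subset_one_mod_four
    by blast
next
  case (three_mod_four s)
  then show ?thesis
    using assms pi_preimage_pm_one_subset_imp_eq by blast
qed

theorem lemma4p8:
  assumes "X \<in> calX2" and "Y \<in> calX2" and "X \<noteq> Y"
  shows "X \<subset> Y \<longleftrightarrow> (X \<subseteq> {1 + 4 * k | k::nat. True} \<and> iX Y < iX X)"
  using assms(1)
proof (cases rule: calX2_cases)
  case (one_mod_four t)
  then have "X \<subseteq> {1 + 4 * k | k::nat. True}" "X \<subseteq> Y \<longleftrightarrow> iX Y < iX X"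
    using assms(2,3) pi_preimage_one_subset_one_mod_four pi_preimage_one_subset_calX2_iff by simp_all
  with assms(3) show ?thesis
    by blast
next
  case (three_mod_four t)
  then have "\<not> X \<subseteq> {1 + 4 * k | k::nat. True}" "\<not> X \<subseteq> Y"
    using assms(2,3) pi_preimage_pm_one_not_subset_one_mod_four pi_preimage_pm_one_not_subset_calX2
    by simp_all
  then show ?thesis
    by blast
qed

end
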